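(* Let $F$ be a Banach lattice, $\tau$ a linear topology on $F$ weaker than the norm topology, $E\subset F$ a closed sublattice, and $\pi$ a linear topology on $E$ with the Kadec-Pelczynski property (relative to the Banach lattice $E$). Suppose there is a linear map $T:F\to E$ which is $\tau$-to-$\pi$ continuous and such that $\mathrm{Id}_F-T$ is $\tau$-to-norm continuous. Then $\tau$ has the Kadec-Pelczynski property.
   Context: For a Banach lattice $G$ with unit sphere $\mathrm{S}_G$, a sequence $(e_n)$ is almost disjoint if there is a disjoint sequence $(g_n)\subset G$ ($|g_n|\wedge|g_m|=0$, $n\ne m$) with $\|e_n-g_n\|\to0$. A linear topology $\sigma$ on $G$ has the Kadec-Pelczynski property if whenever $(f_p)_{p\in P}\subset\mathrm{S}_G$ is a $\sigma$-null net and $(q_n)_{n\in\mathbb{N}}\subset P$, there are $p_n\in P$ with $p_n\ge q_n$ for all $n$ such that $(f_{p_n})_n$ is almost disjoint. *)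

theory Defs
  imports "HOL-Analysis.Analysis"
begin

definition labs :: "'a::{lattice, uminus} \<Rightarrow> 'a" where
  "labs x = sup x (- x)"

class banach_lattice = banach + ordered_real_vector + lattice +
  assumes lattice_norm: "sup x (- x) \<le> sup y (- y) \<Longrightarrow> norm x \<le> norm y"

definition closed_sublattice :: "'a::banach_lattice set \<Rightarrow> bool" where
  "closed_sublattice E \<longleftrightarrow> subspace E \<and> closed E \<and>
     (\<forall>x\<in>E. \<forall>y\<in>E. sup x y \<in> E \<and> inf x y \<in> E)"

definition linear_topology_on :: "'a::real_vector set \<Rightarrow> 'a topology \<Rightarrow> bool" where
  "linear_topology_on E \<sigma> \<longleftrightarrow> topspace \<sigma> = E \<and>
     continuous_map (prod_topology \<sigma> \<sigma>) \<sigma> (\<lambda>(x, y). x + y) \<and>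
     continuous_map (prod_topology euclideanreal \<sigma>) \<sigma> (\<lambda>(c, x). c *\<^sub>R x)"

definition disjoint_seq :: "(nat \<Rightarrow> 'a::banach_lattice) \<Rightarrow> bool" where
  "disjoint_seq g \<longleftrightarrow> (\<forall>n m. n \<noteq> m \<longrightarrow> inf (labs (g n)) (labs (g m)) = 0)"

definition almost_disjoint :: "'a::banach_lattice set \<Rightarrow> (nat \<Rightarrow> 'a) \<Rightarrow> bool" where
  "almost_disjoint G e \<longleftrightarrow> (\<exists>g. (\<forall>n. g n \<in> G) \<and> disjoint_seq g \<and>
      (\<lambda>n. norm (e n - g n)) \<longlonglongrightarrow> 0)"

definition directed_set :: "'p set \<Rightarrow> ('p \<Rightarrow> 'p \<Rightarrow> bool) \<Rightarrow> bool" where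
  "directed_set P le \<longleftrightarrow> P \<noteq> {} \<and> (\<forall>p\<in>P. le p p) \<and>
     (\<forall>p\<in>P. \<forall>q\<in>P. \<forall>r\<in>P. le p q \<longrightarrow> le q r \<longrightarrow> le p r) \<and>
     (\<forall>p\<in>P. \<forall>q\<in>P. \<exists>r\<in>P. le p r \<and> le q r)"

definition net_null :: "'a topology \<Rightarrow> 'p set \<Rightarrow> ('p \<Rightarrow> 'p \<Rightarrow> bool) \<Rightarrow> ('p \<Rightarrow> 'a::zero) \<Rightarrow> bool" where
  "net_null \<sigma> P le f \<longleftrightarrow> (\<forall>U. openin \<sigma> U \<longrightarrow> 0 \<in> U \<longrightarrow>
      (\<exists>p0\<in>P. \<forall>p\<in>P. le p0 p \<longrightarrow> f p \<in> U))"

definition KP_property :: "'p itself \<Rightarrow> 'a::banach_lattice set \<Rightarrow> 'a topology \<Rightarrow> bool" where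
  "KP_property _ G \<sigma> \<longleftrightarrow>
     (\<forall>(P::'p set) le f q. directed_set P le \<longrightarrow>
        (\<forall>p\<in>P. f p \<in> G \<and> norm (f p) = 1) \<longrightarrow> net_null \<sigma> P le f \<longrightarrow>
        (\<forall>n. q n \<in> P) \<longrightarrow>
        (\<exists>pn. (\<forall>n. pn n \<in> P \<and> le (q n) (pn n)) \<and> almost_disjoint G (f \<circ> pn)))"

end

theory Submission
  imports Defs
begin

text \<open>If \<open>(f\<^sub>p)\<close> is a \<open>\<tau>\<close>-null net on the unit sphere, then \<open>T f\<^sub>p\<close> is \<open>\<pi>\<close>-null and
  \<open>f\<^sub>p - T f\<^sub>p \<rightarrow> 0\<close> in norm. Hence \<open>\<parallel>T f\<^sub>p\<parallel> \<rightarrow> 1\<close> and, scalar multiplication being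
  \<open>\<pi>\<close>-continuous, \<open>sgn (T f\<^sub>p)\<close> is eventually a \<open>\<pi>\<close>-null net on the unit sphere of \<open>E\<close> which
  is norm-asymptotic to \<open>f\<^sub>p\<close>. The Kadec-Pelczynski property of \<open>\<pi>\<close> gives \<open>p\<^sub>n \<ge> q\<^sub>n\<close>, chosen so
  late that \<open>\<parallel>f (p\<^sub>n) - sgn (T (f (p\<^sub>n)))\<parallel> \<rightarrow> 0\<close>, along which \<open>sgn (T f\<^sub>p)\<close> is almost disjoint;
  and almost disjointness is stable under norm-null perturbations.
  Nets are treated as limits along the filter of tails of their directed set.\<close>

lemma directed_setD:
  assumes "directed_set P le"
  shows directed_set_nonempty: "P \<noteq> {}"
    and directed_set_refl: "a \<in> P \<Longrightarrow> le a a"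
    and directed_set_trans: "\<lbrakk>a \<in> P; b \<in> P; c \<in> P; le a b; le b c\<rbrakk> \<Longrightarrow> le a c"
    and directed_set_upper_bound: "\<lbrakk>a \<in> P; b \<in> P\<rbrakk> \<Longrightarrow> \<exists>c\<in>P. le a c \<and> le b c"
  using assms unfolding directed_set_def by blast+

definition net_filter :: "'p set \<Rightarrow> ('p \<Rightarrow> 'p \<Rightarrow> bool) \<Rightarrow> 'p filter" where
  "net_filter P le = (INF p\<in>P. principal {q\<in>P. le p q})"

lemma eventually_net_filter:
  assumes dir: "directed_set P le"
  shows "eventually Q (net_filter P le) \<longleftrightarrow> (\<exists>r\<in>P. \<forall>p\<in>P. le r p \<longrightarrow> Q p)"
proof -
  have "\<exists>c\<in>P. principal {q\<in>P. le c q} \<le> inf (principal {q\<in>P. le a q}) (principal {q\<in>P. le b q})"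
    if ab: "a \<in> P" "b \<in> P" for a b
  proof -
    obtain c where c: "c \<in> P" "le a c" "le b c"
      using directed_set_upper_bound[OF dir ab] by blast
    then have "{q\<in>P. le c q} \<subseteq> {q\<in>P. le a q} \<inter> {q\<in>P. le b q}"
      using directed_set_trans[OF dir] ab by blast
    with c(1) show ?thesis
      by (auto simp: inf_principal)
  qed
  then have "eventually Q (net_filter P le) \<longleftrightarrow> (\<exists>r\<in>P. eventually Q (principal {q\<in>P. le r q}))"
    unfolding net_filter_def by (rule eventually_INF_base[OF directed_set_nonempty[OF dir]])
  then show ?thesis
    by (simp add: eventually_principal Ball_def imp_conjL)
qed

lemma eventually_in_net_filter:
  assumes "directed_set P le"
  shows "eventually (\<lambda>p. p \<in> P) (net_filter P le)"
  using directed_set_nonempty[OF assms] by (auto simp: eventually_net_filter[OF assms])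

lemma net_null_iff_limitin:
  assumes "directed_set P le" "0 \<in> topspace \<sigma>"
  shows "net_null \<sigma> P le f \<longleftrightarrow> limitin \<sigma> f 0 (net_filter P le)"
  unfolding net_null_def limitin_def eventually_net_filter[OF assms(1)]
  using assms(2) by meson

lemma directed_set_tail:
  assumes dir: "directed_set P le" and p0: "p0 \<in> P"
  shows "directed_set {p\<in>P. le p0 p} le"
  unfolding directed_set_def
proof (intro conjI ballI impI)
  show "{p\<in>P. le p0 p} \<noteq> {}"
    using p0 directed_set_refl[OF dir p0] by blast
  fix a b c assume a: "a \<in> {p\<in>P. le p0 p}" and b: "b \<in> {p\<in>P. le p0 p}"
  show "le a a"
    using a directed_set_refl[OF dir] by blast
  obtain d where "d \<in> P" "le a d" "le b d"
    using a b directed_set_upper_bound[OF dir] by blast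
  with a p0 directed_set_trans[OF dir] show "\<exists>d\<in>{p\<in>P. le p0 p}. le a d \<and> le b d"
    by blast
  assume "c \<in> {p\<in>P. le p0 p}" "le a b" "le b c"
  with a b show "le a c"
    using directed_set_trans[OF dir] by blast
qed

lemma net_filter_tail:
  assumes dir: "directed_set P le" and p0: "p0 \<in> P"
  shows "net_filter {p\<in>P. le p0 p} le = net_filter P le"
proof (rule filter_eqI)
  fix Q
  show "eventually Q (net_filter {p\<in>P. le p0 p} le) \<longleftrightarrow> eventually Q (net_filter P le)"
    unfolding eventually_net_filter[OF dir] eventually_net_filter[OF directed_set_tail[OF dir p0]]
  proof
    assume "\<exists>r\<in>{p\<in>P. le p0 p}. \<forall>p\<in>{p\<in>P. le p0 p}. le r p \<longrightarrow> Q p"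
    then show "\<exists>r\<in>P. \<forall>p\<in>P. le r p \<longrightarrow> Q p"
      using directed_set_trans[OF dir p0] by blast
  next
    assume "\<exists>r\<in>P. \<forall>p\<in>P. le r p \<longrightarrow> Q p"
    then obtain r where r: "r \<in> P" "\<forall>p\<in>P. le r p \<longrightarrow> Q p" by blast
    obtain s where "s \<in> P" "le r s" "le p0 s"
      using directed_set_upper_bound[OF dir r(1) p0] by blast
    with r directed_set_trans[OF dir] show "\<exists>r\<in>{p\<in>P. le p0 p}. \<forall>p\<in>{p\<in>P. le p0 p}. le r p \<longrightarrow> Q p"
      by blast
  qed
qed

lemma limitin_scaleR:
  assumes "linear_topology_on E \<pi>" "(c \<longlongrightarrow> a) F" "limitin \<pi> x l F"
  shows "limitin \<pi> (\<lambda>p. c p *\<^sub>R x p) (a *\<^sub>R l) F"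
proof -
  have "continuous_map (prod_topology euclideanreal \<pi>) \<pi> (\<lambda>(c, x). c *\<^sub>R x)"
    using assms(1) unfolding linear_topology_on_def by blast
  moreover have "limitin (prod_topology euclideanreal \<pi>) (\<lambda>p. (c p, x p)) (a, l) F"
    using assms(2,3) by (simp add: limitin_pairwise o_def)
  ultimately have "limitin \<pi> ((\<lambda>(c, x). c *\<^sub>R x) \<circ> (\<lambda>p. (c p, x p))) (a *\<^sub>R l) F"
    using continuous_map_limit by fastforce
  then show ?thesis
    by (simp add: o_def)
qed

lemma tendsto_norm_one_of_close:
  fixes x y :: "'b \<Rightarrow> 'a::real_normed_vector"
  assumes "((\<lambda>p. x p - y p) \<longlongrightarrow> 0) F" "eventually (\<lambda>p. norm (x p) = 1) F"
  shows "((\<lambda>p. norm (y p)) \<longlongrightarrow> 1) F"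
proof -
  have "eventually (\<lambda>p. norm (norm (y p) - 1) \<le> norm (x p - y p)) F"
    using assms(2) by eventually_elim (metis norm_triangle_ineq3 real_norm_def norm_minus_commute)
  then have "((\<lambda>p. norm (y p) - 1) \<longlongrightarrow> 0) F"
    by (rule Lim_null_comparison[OF _ tendsto_norm_zero[OF assms(1)]])
  then show ?thesis
    by (simp add: LIM_zero_iff)
qed

lemma limitin_sgn:
  assumes "linear_topology_on E \<pi>" "limitin \<pi> y 0 F" "((\<lambda>p. norm (y p)) \<longlongrightarrow> 1) F"
  shows "limitin \<pi> (\<lambda>p. sgn (y p)) 0 F"
proof -
  have "((\<lambda>p. inverse (norm (y p))) \<longlongrightarrow> 1) F"
    using tendsto_inverse[OF assms(3)] by simp
  from limitin_scaleR[OF assms(1) this assms(2)] show ?thesis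
    by (simp add: sgn_div_norm)
qed

lemma norm_diff_sgn_le:
  fixes x y :: "'a::real_normed_vector"
  assumes "norm x = 1"
  shows "norm (x - sgn y) \<le> 2 * norm (x - y)"
proof (cases "y = 0")
  case True
  then show ?thesis using assms by simp
next
  case False
  have "norm (y - sgn y) = \<bar>norm y - 1\<bar>"
  proof -
    have "y - sgn y = (norm y - 1) *\<^sub>R sgn y"
      using False by (simp add: sgn_div_norm algebra_simps)
    then show ?thesis using False by (simp add: norm_sgn)
  qed
  also have "\<dots> \<le> norm (x - y)"
    using assms norm_triangle_ineq3[of x y] by (simp add: abs_minus_commute)
  finally show ?thesis
    using norm_triangle_ineq[of "x - y" "y - sgn y"] by simp
qed

lemma null_net_normalise:
  assumes lin: "linear_topology_on E \<pi>" and E: "subspace E" and y_E: "\<And>p. y p \<in> E"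
    and y_lim: "limitin \<pi> y 0 F"
    and close: "((\<lambda>p. x p - y p) \<longlongrightarrow> 0) F"
    and x_unit: "eventually (\<lambda>p. norm (x p) = 1) F"
  shows "limitin \<pi> (\<lambda>p. sgn (y p)) 0 F"
    and "eventually (\<lambda>p. sgn (y p) \<in> E \<and> norm (sgn (y p)) = 1) F"
    and "((\<lambda>p. x p - sgn (y p)) \<longlongrightarrow> 0) F"
proof -
  have norm_y: "((\<lambda>p. norm (y p)) \<longlongrightarrow> 1) F"
    using close x_unit by (rule tendsto_norm_one_of_close)
  then show "limitin \<pi> (\<lambda>p. sgn (y p)) 0 F"
    using lin y_lim by (intro limitin_sgn)
  have sgn_y_E: "sgn (y p) \<in> E" for p
    using E y_E by (simp add: sgn_div_norm subspace_scale)
  show "eventually (\<lambda>p. sgn (y p) \<in> E \<and> norm (sgn (y p)) = 1) F"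
    using order_tendstoD(1)[OF norm_y zero_less_one]
    by eventually_elim (auto simp: sgn_y_E norm_sgn)
  show "((\<lambda>p. x p - sgn (y p)) \<longlongrightarrow> 0) F"
  proof (rule Lim_null_comparison)
    show "eventually (\<lambda>p. norm (x p - sgn (y p)) \<le> 2 * norm (x p - y p)) F"
      using x_unit by eventually_elim (rule norm_diff_sgn_le)
    show "((\<lambda>p. 2 * norm (x p - y p)) \<longlongrightarrow> 0) F"
      using tendsto_mult_right_zero[OF tendsto_norm_zero[OF close]] .
  qed
qed

lemma almost_disjoint_approx:
  assumes "almost_disjoint G e" "(\<lambda>n. norm (e' n - e n)) \<longlonglongrightarrow> 0"
  shows "almost_disjoint G e'"
proof -
  obtain g where g: "\<forall>n. g n \<in> G" "disjoint_seq g" "(\<lambda>n. norm (e n - g n)) \<longlonglongrightarrow> 0"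
    using assms(1) unfolding almost_disjoint_def by blast
  have "(\<lambda>n. norm (e' n - e n) + norm (e n - g n)) \<longlonglongrightarrow> 0"
    using tendsto_add_zero[OF assms(2) g(3)] .
  then have "(\<lambda>n. norm (e' n - g n)) \<longlonglongrightarrow> 0"
    by (rule Lim_null_comparison[rotated]) (auto intro!: always_eventually norm_diff_triangle_le)
  with g(1,2) show ?thesis
    unfolding almost_disjoint_def by blast
qed

lemma KP_property_approx_null_net:
  fixes P :: "'p set"
  assumes KP: "KP_property TYPE('p) G \<sigma>"
    and dir: "directed_set P le"
    and h_lim: "limitin \<sigma> h 0 (net_filter P le)"
    and h_unit: "eventually (\<lambda>p. h p \<in> G \<and> norm (h p) = 1) (net_filter P le)"
    and close: "((\<lambda>p. f p - h p) \<longlongrightarrow> 0) (net_filter P le)"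
    and q: "\<forall>n. q n \<in> P"
  shows "\<exists>pn. (\<forall>n. pn n \<in> P \<and> le (q n) (pn n)) \<and> almost_disjoint G (f \<circ> pn)"
proof -
  \<comment> \<open>The Kadec-Pelczynski property only applies to nets lying entirely on the unit sphere of \<open>G\<close>.\<close>
  obtain p0 where p0: "p0 \<in> P" "\<forall>p\<in>P. le p0 p \<longrightarrow> h p \<in> G \<and> norm (h p) = 1"
    using h_unit unfolding eventually_net_filter[OF dir] by blast
  define P' where "P' = {p\<in>P. le p0 p}"
  have dir': "directed_set P' le"
    unfolding P'_def using directed_set_tail[OF dir p0(1)] .
  have F': "net_filter P' le = net_filter P le"
    unfolding P'_def using net_filter_tail[OF dir p0(1)] .
  have h_null: "net_null \<sigma> P' le h"
    using net_null_iff_limitin[OF dir' limitin_topspace[OF h_lim]] h_lim F' by simp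
  have "eventually (\<lambda>p. le (q n) p \<and> norm (f p - h p) < inverse (real (Suc n))) (net_filter P' le)" for n
  proof -
    have "eventually (\<lambda>p. le (q n) p) (net_filter P le)"
      using q unfolding eventually_net_filter[OF dir] by blast
    moreover have "eventually (\<lambda>p. norm (f p - h p) < inverse (real (Suc n))) (net_filter P le)"
      using order_tendstoD(2)[OF tendsto_norm_zero[OF close]] by simp
    ultimately show ?thesis
      unfolding F' by (rule eventually_conj)
  qed
  then obtain r where r: "\<And>n. r n \<in> P'"
    "\<And>n p. p \<in> P' \<Longrightarrow> le (r n) p \<Longrightarrow> le (q n) p \<and> norm (f p - h p) < inverse (real (Suc n))"
    unfolding eventually_net_filter[OF dir'] by metis
  obtain pn where pn: "\<forall>n. pn n \<in> P' \<and> le (r n) (pn n)" and ad: "almost_disjoint G (h \<circ> pn)"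
    using KP dir' p0(2) h_null r(1) unfolding KP_property_def P'_def by blast
  have "(\<lambda>n. norm ((f \<circ> pn) n - (h \<circ> pn) n)) \<longlonglongrightarrow> 0"
    by (rule Lim_null_comparison[OF _ LIMSEQ_inverse_real_of_nat]) (use pn r(2) in \<open>simp add: less_imp_le\<close>)
  with ad have "almost_disjoint G (f \<circ> pn)"
    by (rule almost_disjoint_approx)
  moreover have "\<forall>n. pn n \<in> P \<and> le (q n) (pn n)"
    using pn r(2) unfolding P'_def by blast
  ultimately show ?thesis by blast
qed

theorem mainTheorem15:
  fixes \<tau> :: "'a::banach_lattice topology"
    and E :: "'a set"
    and \<pi> :: "'a topology"
    and T :: "'a \<Rightarrow> 'a"
  assumes tau_lin: "linear_topology_on UNIV \<tau>"
    and tau_weaker: "\<And>U. openin \<tau> U \<Longrightarrow> open U"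
    and E_sub: "closed_sublattice E"
    and pi_lin: "linear_topology_on E \<pi>"
    and pi_KP: "KP_property TYPE('p) E \<pi>"
    and T_lin: "linear T"
    and T_range: "\<And>x. T x \<in> E"
    and T_cont: "continuous_map \<tau> \<pi> T"
    and IdT_cont: "continuous_map \<tau> euclidean (\<lambda>x. x - T x)"
  shows "KP_property TYPE('p) UNIV \<tau>"
  unfolding KP_property_def
proof (intro allI impI)
  fix P :: "'p set" and le :: "'p \<Rightarrow> 'p \<Rightarrow> bool" and f :: "'p \<Rightarrow> 'a" and q :: "nat \<Rightarrow> 'p"
  assume dir: "directed_set P le" and unit: "\<forall>p\<in>P. f p \<in> UNIV \<and> norm (f p) = 1"
    and null: "net_null \<tau> P le f" and q: "\<forall>n. q n \<in> P"
  define F where "F = net_filter P le"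
  have "topspace \<tau> = UNIV"
    using tau_lin unfolding linear_topology_on_def by blast
  then have f_lim: "limitin \<tau> f 0 F"
    using null net_null_iff_limitin[OF dir, of \<tau>] unfolding F_def by simp
  have T0: "T 0 = 0"
    using T_lin by (rule linear_0)
  have Tf_lim: "limitin \<pi> (\<lambda>p. T (f p)) 0 F"
    using continuous_map_limit[OF T_cont f_lim] T0 by (simp add: o_def)
  have close: "((\<lambda>p. f p - T (f p)) \<longlongrightarrow> 0) F"
    using continuous_map_limit[OF IdT_cont f_lim] T0 by (simp add: o_def)
  have unit_F: "eventually (\<lambda>p. norm (f p) = 1) F"
    using eventually_in_net_filter[OF dir] unit unfolding F_def by (auto elim: eventually_mono)
  have "subspace E"
    using E_sub unfolding closed_sublattice_def by blast
  note normalised = null_net_normalise[OF pi_lin this T_range Tf_lim close unit_F]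
  obtain pn where "\<forall>n. pn n \<in> P \<and> le (q n) (pn n)" "almost_disjoint E (f \<circ> pn)"
    using KP_property_approx_null_net[OF pi_KP dir normalised[unfolded F_def] q] by blast
  then show "\<exists>pn. (\<forall>n. pn n \<in> P \<and> le (q n) (pn n)) \<and> almost_disjoint UNIV (f \<circ> pn)"
    unfolding almost_disjoint_def by blast
qed

end
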